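(* Let $n\ge2$, let $T:\mathbb R^n\to\mathbb R^n$ be a symmetric linear isomorphism, and define $f:\mathcal K_0^n\to\mathcal K_0^n$ by $f(A)=T(A^\circ)$. (1) If $T$ is positive-definite, then $f$ is topologically conjugate with the polar mapping $A\mapsto A^\circ$ (there is a homeomorphism $\Phi$ of $(\mathcal K_0^n,d_{AW})$ with $f=\Phi\circ\alpha\circ\Phi^{-1}$); in particular $f$ has a unique fixed point. (2) If $T$ is not positive-definite, then $f$ has infinitely many fixed points in $\mathcal K_{(0),b}^n$.
   Context: $\mathcal K_0^n$: closed convex subsets of $\mathbb R^n$ containing $0$, with the Attouch–Wets metric $d_{AW}(A,K)=\sup_{j\in\mathbb N}\min\{\frac1j,\sup_{\|x\|<j}|d(x,A)-d(x,K)|\}$, $d(x,A)=\inf_{a\in A}\|x-a\|$. $\mathcal K_{(0),b}^n$: compact convex sets containing $0$ in their interior. Polar: $A^\circ=\{x:\sup_{a\in A}\langle a,x\rangle\le1\}$; $\alpha(A)=A^\circ$. *)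

theory Defs
  imports "HOL-Analysis.Analysis"
begin

definition K0 :: "('a::euclidean_space) set set" where
  "K0 = {A. closed A \<and> convex A \<and> 0 \<in> A}"

definition K0b :: "('a::euclidean_space) set set" where
  "K0b = {A. compact A \<and> convex A \<and> 0 \<in> interior A}"

definition polar :: "('a::euclidean_space) set \<Rightarrow> 'a set" where
  "polar A = {x. \<forall>a\<in>A. a \<bullet> x \<le> 1}"

definition dAW :: "('a::euclidean_space) set \<Rightarrow> 'a set \<Rightarrow> real" where
  "dAW A K = (SUP j\<in>{1::nat..}. min (1 / real j)
       (SUP x\<in>{x. norm x < real j}. \<bar>infdist x A - infdist x K\<bar>))"

definition aw_continuous :: "('a::euclidean_space set \<Rightarrow> 'a set) \<Rightarrow> bool" where
  "aw_continuous F \<longleftrightarrow> (\<forall>A\<in>K0. \<forall>e>0. \<exists>d>0. \<forall>B\<in>K0. dAW A B < d \<longrightarrow> dAW (F A) (F B) < e)"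

definition aw_homeomorphism :: "('a::euclidean_space set \<Rightarrow> 'a set) \<Rightarrow> ('a set \<Rightarrow> 'a set) \<Rightarrow> bool" where
  "aw_homeomorphism F G \<longleftrightarrow> F ` K0 \<subseteq> K0 \<and> G ` K0 \<subseteq> K0 \<and>
     (\<forall>A\<in>K0. G (F A) = A) \<and> (\<forall>A\<in>K0. F (G A) = A) \<and>
     aw_continuous F \<and> aw_continuous G"

end

theory Submission
  imports Defs
begin

text \<open>
  Diagonalise \<open>T\<close> in an orthonormal eigenbasis \<open>B\<close> with eigenvalues \<open>\<mu>\<close>.

  If \<open>T\<close> is positive definite it has a self-adjoint square root \<open>L\<close>; self-adjointness
  gives \<open>polar (L\<inverse> A) = L (polar A)\<close>, so \<open>f A = L (polar (L\<inverse> A))\<close>. Linear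
  isomorphisms act as homeomorphisms of \<open>(K0, dAW)\<close>, so \<open>f\<close> is conjugate to the polar map,
  and its fixed points correspond to the self-polar sets, of which the unit ball is the only one.

  If some eigenvalue \<open>\<mu> u\<close> is negative, consider for \<open>t > 0\<close> the body
  \<open>{x. rho t x \<le> 1}\<close> with \<open>rho t x = rho_u t (u \<bullet> x) + (\<Sum>b\<noteq>u. (b \<bullet> x)\<^sup>2 / \<bar>\<mu> b\<bar>)\<close>,
  where \<open>rho_u t s = (s / t)\<^sup>2\<close> for \<open>s \<ge> 0\<close> and \<open>(s t / \<mu> u)\<^sup>2\<close> for \<open>s < 0\<close>.
  By Young's inequality and its equality case, its polar is the sublevel set of the conjugate
  function, and this conjugate is exactly \<open>rho t \<circ> T\<close>: the sign flip caused by \<open>\<mu> u < 0\<close>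
  is compensated by the asymmetry of \<open>rho_u t\<close>. Hence every such body is fixed by \<open>f\<close>, and
  different \<open>t\<close> give different bodies.
\<close>

section \<open>Spectral theorem for self-adjoint maps\<close>

lemma nonpos_if_linear_le_quadratic:
  fixes a C :: real
  assumes "\<And>t. 2 * t * a \<le> t\<^sup>2 * C"
  shows "a \<le> 0"
proof (rule ccontr)
  assume "\<not> a \<le> 0"
  then have a: "a > 0" by linarith
  define t where "t = a / (\<bar>C\<bar> + 1)"
  have t: "t > 0" using a by (simp add: t_def)
  have "2 * a \<le> t * C" using assms[of t] t by (simp add: power2_eq_square)
  also have "\<dots> \<le> t * \<bar>C\<bar>" using t by (simp add: mult_left_mono)
  also have "\<dots> < a" using a by (simp add: t_def divide_less_eq field_simps)
  finally show False using a by simp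
qed

lemma selfadjoint_maximiser_is_eigenvector:
  fixes T :: "'a::euclidean_space \<Rightarrow> 'a"
  assumes lin: "linear T" and sa: "\<And>x y. T x \<bullet> y = x \<bullet> T y"
    and S: "subspace S" "\<And>x. x \<in> S \<Longrightarrow> T x \<in> S"
    and v: "v \<in> S" "norm v = 1"
    and max: "\<And>x. x \<in> S \<Longrightarrow> norm x = 1 \<Longrightarrow> x \<bullet> T x \<le> v \<bullet> T v"
  shows "T v = (v \<bullet> T v) *\<^sub>R v"
proof -
  define l where "l = v \<bullet> T v"
  have rayleigh: "x \<bullet> T x \<le> l * (x \<bullet> x)" if "x \<in> S" for x
  proof (cases "x = 0")
    case False
    have "(x /\<^sub>R norm x) \<bullet> T (x /\<^sub>R norm x) \<le> l"
      unfolding l_def using that False S(1) by (intro max) (simp_all add: subspace_scale)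
    moreover have "(x /\<^sub>R norm x) \<bullet> T (x /\<^sub>R norm x) = (x \<bullet> T x) / (x \<bullet> x)"
      by (simp add: linear_scale[OF lin] dot_square_norm power2_eq_square field_simps)
    ultimately show ?thesis using False by (simp add: divide_le_eq)
  qed (simp add: linear_0[OF lin])
  define w where "w = T v - l *\<^sub>R v"
  have wS: "w \<in> S" unfolding w_def using S v by (simp add: subspace_diff subspace_scale)
  have vv: "v \<bullet> v = 1" using v by (simp add: norm_eq_1)
  have vw: "v \<bullet> w = 0" unfolding w_def l_def by (simp add: inner_diff_right vv)
  have wTv: "w \<bullet> T v = w \<bullet> w"
    using vw by (simp add: w_def inner_diff_right inner_diff_left inner_commute)
  have vTw: "v \<bullet> T w = w \<bullet> w" using wTv sa[of v w] by (simp add: inner_commute)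
  \<comment> \<open>The Rayleigh quotient at \<open>v + t w\<close> is at most \<open>l\<close>; expanding, the terms of order 0 cancel.\<close>
  have "2 * t * (w \<bullet> w) \<le> t\<^sup>2 * (l * (w \<bullet> w) - w \<bullet> T w)" for t
  proof -
    have "v + t *\<^sub>R w \<in> S" using v wS S by (simp add: subspace_add subspace_scale)
    from rayleigh[OF this] show ?thesis
      by (simp add: linear_add[OF lin] linear_scale[OF lin] inner_add_left inner_add_right
          vw vv vTw wTv inner_commute[of w v] l_def[symmetric] power2_eq_square algebra_simps)
  qed
  then have "w \<bullet> w \<le> 0" by (rule nonpos_if_linear_le_quadratic)
  then have "w = 0" by (meson inner_gt_zero_iff not_le)
  then show ?thesis by (simp add: w_def l_def)
qed

lemma selfadjoint_unit_eigenvector: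
  fixes T :: "'a::euclidean_space \<Rightarrow> 'a"
  assumes lin: "linear T" and sa: "\<And>x y. T x \<bullet> y = x \<bullet> T y"
    and S: "subspace S" "\<And>x. x \<in> S \<Longrightarrow> T x \<in> S" and x: "x \<in> S" "x \<noteq> 0"
  obtains v where "v \<in> S" "norm v = 1" "T v = (v \<bullet> T v) *\<^sub>R v"
proof -
  define K where "K = S \<inter> sphere 0 1"
  have "x /\<^sub>R norm x \<in> K" using x S(1) by (simp add: K_def subspace_scale)
  then have "K \<noteq> {}" by auto
  moreover have "compact K"
    unfolding K_def using closed_subspace[OF S(1)] by (simp add: closed_Int_compact)
  moreover have "continuous_on K (\<lambda>x. x \<bullet> T x)"
    using lin by (intro continuous_intros linear_continuous_on) (simp add: linear_conv_bounded_linear)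
  ultimately obtain v where v: "v \<in> K" and vmax: "\<forall>y\<in>K. y \<bullet> T y \<le> v \<bullet> T v"
    using continuous_attains_sup by blast
  show ?thesis
  proof (rule that)
    show "v \<in> S" "norm v = 1" using v by (auto simp: K_def)
    then show "T v = (v \<bullet> T v) *\<^sub>R v"
      using vmax by (intro selfadjoint_maximiser_is_eigenvector[OF lin sa S]) (auto simp: K_def)
  qed
qed

lemma span_insert_hyperplane_section:
  fixes v :: "'a::euclidean_space"
  assumes S: "subspace S" and v: "v \<in> S" "norm v = 1"
    and B: "span B = S \<inter> {y. v \<bullet> y = 0}"
  shows "span (insert v B) = S"
proof
  have "B \<subseteq> S" using B span_superset by blast
  then show "span (insert v B) \<subseteq> S" using S v by (simp add: span_minimal)
  show "S \<subseteq> span (insert v B)"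
  proof
    fix y assume y: "y \<in> S"
    have "y - (v \<bullet> y) *\<^sub>R v \<in> span B"
      using y v S by (simp add: B subspace_diff subspace_scale inner_diff_right norm_eq_1)
    then have "y - (v \<bullet> y) *\<^sub>R v \<in> span (insert v B)" by (metis span_mono subset_insertI subsetD)
    then show "y \<in> span (insert v B)" by (metis diff_add_cancel span_add span_base span_mul insertI1)
  qed
qed

lemma selfadjoint_eigenbasis_subspace:
  fixes T :: "'a::euclidean_space \<Rightarrow> 'a"
  assumes lin: "linear T" and sa: "\<And>x y. T x \<bullet> y = x \<bullet> T y"
  shows "subspace S \<Longrightarrow> (\<And>x. x \<in> S \<Longrightarrow> T x \<in> S) \<Longrightarrow>
     \<exists>B. span B = S \<and> pairwise orthogonal B \<and> (\<forall>b\<in>B. norm b = 1 \<and> (\<exists>c. T b = c *\<^sub>R b))"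
proof (induction "dim S" arbitrary: S rule: less_induct)
  case (less S)
  show ?case
  proof (cases "S \<subseteq> {0}")
    case True
    then have "S = {0}" using less.prems subspace_0 by blast
    then show ?thesis by (intro exI[of _ "{}"]) auto
  next
    case False
    then obtain x where "x \<in> S" "x \<noteq> 0" by auto
    then obtain v where v: "v \<in> S" "norm v = 1" and ev: "T v = (v \<bullet> T v) *\<^sub>R v"
      using selfadjoint_unit_eigenvector[OF lin sa less.prems] by blast
    define S' where "S' = S \<inter> {y. v \<bullet> y = 0}"
    have S'sub: "subspace S'"
      unfolding S'_def using less.prems(1) subspace_hyperplane[of v] by (simp add: subspace_inter)
    have S'inv: "T y \<in> S'" if "y \<in> S'" for y
    proof -
      have "v \<bullet> T y = (v \<bullet> T v) * (v \<bullet> y)" by (metis sa ev inner_scaleR_left)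
      then show ?thesis using that less.prems(2) by (auto simp: S'_def)
    qed
    have "S' \<subseteq> S" "v \<notin> S'" using v by (auto simp: S'_def norm_eq_1)
    then have "span S' \<subset> span S" using v S'sub less.prems(1) by (metis psubsetI span_eq_iff)
    then have "dim S' < dim S" by (rule dim_psubset)
    then obtain B where B: "span B = S'" "pairwise orthogonal B"
        "\<forall>b\<in>B. norm b = 1 \<and> (\<exists>c. T b = c *\<^sub>R b)"
      using less.hyps S'sub S'inv by blast
    have "B \<subseteq> S'" using B(1) span_superset by blast
    then have "pairwise orthogonal (insert v B)"
      using B(2) by (auto simp: pairwise_insert S'_def orthogonal_def inner_commute)
    moreover have "span (insert v B) = S"
      using span_insert_hyperplane_section[OF less.prems(1) v] B(1) by (simp add: S'_def)
    ultimately show ?thesis using B(3) v ev by (intro exI[of _ "insert v B"]) blast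
  qed
qed

locale orthonormal_basis =
  fixes B :: "'a::euclidean_space set"
  assumes finite_basis: "finite B" and span_basis: "span B = UNIV"
    and orthogonal_basis: "pairwise orthogonal B" and norm_basis: "\<And>b. b \<in> B \<Longrightarrow> norm b = 1"
begin

lemma basis_nonzero: "b \<in> B \<Longrightarrow> b \<noteq> 0"
  using norm_basis by force

lemma inner_basis_sum: "b \<in> B \<Longrightarrow> b \<bullet> (\<Sum>b'\<in>B. c b' *\<^sub>R b') = c b"
proof -
  assume b: "b \<in> B"
  have "b \<bullet> (\<Sum>b'\<in>B. c b' *\<^sub>R b') = c b * (b \<bullet> b) + (\<Sum>b'\<in>B-{b}. c b' * (b \<bullet> b'))"
    by (simp add: inner_sum_right inner_add_right sum.remove[OF finite_basis b])
  also have "(\<Sum>b'\<in>B-{b}. c b' * (b \<bullet> b')) = 0"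
    using orthogonal_basis b by (intro sum.neutral) (auto simp: pairwise_def orthogonal_def)
  finally show ?thesis using norm_basis[OF b] by (simp add: norm_eq_1)
qed

lemma basis_expansion: "(\<Sum>b\<in>B. (b \<bullet> x) *\<^sub>R b) = x"
  using orthonormal_basis_expand[OF orthogonal_basis norm_basis _ finite_basis, of x]
  by (simp add: span_basis inner_commute)

lemma inner_basis_expansion: "x \<bullet> y = (\<Sum>b\<in>B. (b \<bullet> x) * (b \<bullet> y))"
  by (subst basis_expansion[symmetric, of x]) (simp add: inner_sum_left)

definition diag :: "('a \<Rightarrow> real) \<Rightarrow> 'a \<Rightarrow> 'a" where
  "diag w x = (\<Sum>b\<in>B. (w b * (b \<bullet> x)) *\<^sub>R b)"

lemma inner_basis_diag: "b \<in> B \<Longrightarrow> b \<bullet> diag w x = w b * (b \<bullet> x)"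
  unfolding diag_def by (rule inner_basis_sum)

lemma diag_diag: "diag w (diag w' x) = diag (\<lambda>b. w b * w' b) x"
  unfolding diag_def[of w] diag_def[of "\<lambda>b. w b * w' b"]
  by (intro sum.cong refl) (simp add: inner_basis_diag)

lemma diag_cong: "(\<And>b. b \<in> B \<Longrightarrow> w b = w' b) \<Longrightarrow> diag w x = diag w' x"
  unfolding diag_def by (intro sum.cong refl) simp

lemma diag_one: "(\<And>b. b \<in> B \<Longrightarrow> w b = 1) \<Longrightarrow> diag w x = x"
  using diag_cong[of w "\<lambda>_. 1"] by (simp add: diag_def basis_expansion)

lemma diag_selfadjoint: "diag w x \<bullet> y = x \<bullet> diag w y"
  by (simp add: inner_basis_expansion[of "diag w x"] inner_basis_expansion[of x]
      inner_basis_diag mult_ac)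

lemma linear_diag: "linear (diag w)"
  by (rule linearI)
    (simp_all add: diag_def inner_add_right distrib_left scaleR_add_left sum.distrib
      scaleR_sum_right mult.left_commute)

lemma eigenbasis_diag:
  assumes "linear T" "\<And>b. b \<in> B \<Longrightarrow> T b = \<mu> b *\<^sub>R b"
  shows "T x = diag \<mu> x"
proof -
  have "T x = (\<Sum>b\<in>B. (b \<bullet> x) *\<^sub>R T b)"
    by (subst basis_expansion[symmetric, of x]) (simp add: linear_sum[OF assms(1)] linear_scale[OF assms(1)])
  also have "\<dots> = diag \<mu> x" unfolding diag_def by (intro sum.cong refl) (simp add: assms(2))
  finally show ?thesis .
qed

lemma inner_diag_pos:
  assumes "\<And>b. b \<in> B \<Longrightarrow> w b > 0" "x \<noteq> 0"
  shows "x \<bullet> diag w x > 0"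
proof -
  obtain b where b: "b \<in> B" "b \<bullet> x \<noteq> 0"
    using basis_expansion[of x] assms(2) by (metis (no_types, lifting) scale_eq_0_iff sum.neutral)
  have "x \<bullet> diag w x = (\<Sum>b\<in>B. w b * (b \<bullet> x)\<^sup>2)"
    by (simp add: inner_basis_expansion[of x] inner_basis_diag power2_eq_square mult_ac)
  also have "\<dots> > 0"
    using b assms(1) by (intro sum_pos2[OF finite_basis b(1)]) (auto simp: less_imp_le)
  finally show ?thesis .
qed

lemma diag_sqrt:
  assumes pos: "\<And>b. b \<in> B \<Longrightarrow> w b > 0"
  obtains L L' where "linear L" "linear L'" "\<And>x. L (L' x) = x" "\<And>x. L' (L x) = x"
    "\<And>x y. L' x \<bullet> y = x \<bullet> L' y" "\<And>x. L (L x) = diag w x"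
proof
  show "linear (diag (\<lambda>b. sqrt (w b)))" "linear (diag (\<lambda>b. 1 / sqrt (w b)))"
    by (rule linear_diag)+
  show "diag (\<lambda>b. sqrt (w b)) (diag (\<lambda>b. 1 / sqrt (w b)) x) = x"
    "diag (\<lambda>b. 1 / sqrt (w b)) (diag (\<lambda>b. sqrt (w b)) x) = x" for x
    using pos by (auto simp: diag_diag intro!: diag_one dest: pos)
  show "diag (\<lambda>b. sqrt (w b)) (diag (\<lambda>b. sqrt (w b)) x) = diag w x" for x
    using pos by (auto simp: diag_diag abs_of_pos intro!: diag_cong)
qed (rule diag_selfadjoint)

lemma positive_definite_iff_eigenvalues_pos:
  assumes "linear T" "\<And>b. b \<in> B \<Longrightarrow> T b = \<mu> b *\<^sub>R b"
  shows "(\<forall>x. x \<noteq> 0 \<longrightarrow> x \<bullet> T x > 0) \<longleftrightarrow> (\<forall>b\<in>B. \<mu> b > 0)"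
proof
  assume pd: "\<forall>x. x \<noteq> 0 \<longrightarrow> x \<bullet> T x > 0"
  show "\<forall>b\<in>B. \<mu> b > 0"
  proof
    fix b assume b: "b \<in> B"
    then have "b \<noteq> 0" "b \<bullet> b = 1" using basis_nonzero norm_basis[OF b] by (auto simp: norm_eq_1)
    then show "\<mu> b > 0" using pd assms(2)[OF b] by force
  qed
qed (simp add: inner_diag_pos eigenbasis_diag[OF assms])

end

lemma selfadjoint_orthonormal_eigenbasis:
  fixes T :: "'a::euclidean_space \<Rightarrow> 'a"
  assumes "linear T" "\<And>x y. T x \<bullet> y = x \<bullet> T y"
  obtains B \<mu> where "orthonormal_basis B" "\<And>b. b \<in> B \<Longrightarrow> T b = \<mu> b *\<^sub>R b"
proof -
  obtain B where B: "span B = UNIV" "pairwise orthogonal B"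
      "\<forall>b\<in>B. norm b = 1 \<and> (\<exists>c. T b = c *\<^sub>R b)"
    using selfadjoint_eigenbasis_subspace[OF assms, of UNIV] by auto
  then have "finite B" by (metis pairwise_orthogonal_independent independent_imp_finite norm_zero zero_neq_one)
  then have "orthonormal_basis B" using B by (simp add: orthonormal_basis_def)
  moreover obtain \<mu> where "\<forall>b\<in>B. T b = \<mu> b *\<^sub>R b" using B(3) by metis
  ultimately show ?thesis using that by blast
qed

lemma matrix_vector_mult_selfadjoint:
  fixes M :: "real^'n^'n"
  assumes "transpose M = M"
  shows "(M *v x) \<bullet> y = x \<bullet> (M *v y)"
proof -
  have "x \<bullet> (M *v y) = (x v* transpose M) \<bullet> y" by (simp add: dot_lmul_matrix assms)
  then show ?thesis by simp
qed

lemma eigenvalue_nonzero_if_inj: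
  assumes "linear T" "inj T" "v \<noteq> 0" "T v = c *\<^sub>R v"
  shows "c \<noteq> 0"
proof
  assume "c = 0"
  then have "T v = T 0" using assms(4) by (simp add: linear_0[OF assms(1)])
  then show False using assms(2,3) by (simp add: inj_eq)
qed

section \<open>Polar sets\<close>

lemma polar_in_K0: "polar A \<in> K0"
proof -
  have "polar A = (\<Inter>a\<in>A. {x. a \<bullet> x \<le> 1})" by (auto simp: polar_def)
  then show ?thesis
    by (simp add: K0_def polar_def closed_INT closed_halfspace_le convex_INT convex_halfspace_le)
qed

lemma polar_antimono: "A \<subseteq> C \<Longrightarrow> polar C \<subseteq> polar A"
  by (auto simp: polar_def)

lemma polar_cball:
  fixes r :: real
  assumes r: "r > 0"
  shows "polar (cball (0::'a::euclidean_space) r) = cball 0 (1 / r)"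
proof (intro equalityI subsetI)
  fix y :: 'a assume y: "y \<in> polar (cball 0 r)"
  show "y \<in> cball 0 (1 / r)"
  proof (cases "y = 0")
    case False
    have "(r / norm y) *\<^sub>R y \<in> cball 0 r" using r by simp
    then have "((r / norm y) *\<^sub>R y) \<bullet> y \<le> 1" using y unfolding polar_def by blast
    moreover have "((r / norm y) *\<^sub>R y) \<bullet> y = r * norm y"
      using False by (simp add: power2_norm_eq_inner[symmetric] power2_eq_square)
    ultimately have "r * norm y \<le> 1" by simp
    then show ?thesis using r by (simp add: field_simps)
  qed (use r in simp)
next
  fix y :: 'a assume y: "y \<in> cball 0 (1 / r)"
  have "a \<bullet> y \<le> 1" if "norm a \<le> r" for a
  proof -
    have "a \<bullet> y \<le> norm a * norm y" by (rule norm_cauchy_schwarz)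
    also have "\<dots> \<le> r * (1 / r)" using that y r by (intro mult_mono) auto
    finally show ?thesis using r by simp
  qed
  then show "y \<in> polar (cball 0 r)" by (simp add: polar_def)
qed

lemma polar_eq_self_iff: "polar C = C \<longleftrightarrow> C = cball (0::'a::euclidean_space) 1"
proof
  assume C: "polar C = C"
  have "x \<bullet> x \<le> 1" if "x \<in> C" for x
    using that C by (auto simp: polar_def)
  then have sub: "C \<subseteq> cball 0 1" by (auto simp: dot_square_norm power_le_one_iff abs_square_le_1)
  have "cball 0 1 = polar (cball (0::'a) 1)" by (simp add: polar_cball)
  also have "\<dots> \<subseteq> C" using polar_antimono[OF sub] C by simp
  finally show "C = cball 0 1" using sub by blast
qed (use polar_cball[of 1] in simp)

lemma bounded_polar:
  assumes "0 \<in> interior S"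
  shows "bounded (polar S)"
proof -
  obtain r where r: "r > 0" "cball 0 r \<subseteq> S" using assms mem_interior_cball by blast
  then have "polar S \<subseteq> cball 0 (1 / r)" using polar_antimono polar_cball by metis
  then show ?thesis using bounded_cball bounded_subset by blast
qed

lemma polar_image_selfadjoint:
  assumes "\<And>x y. h x \<bullet> y = x \<bullet> h y" "\<And>x. g (h x) = x" "\<And>x. h (g x) = x"
  shows "polar (h ` A) = g ` polar A"
proof -
  have "polar (h ` A) = {y. h y \<in> polar A}" using assms(1) by (auto simp: polar_def)
  also have "\<dots> = g ` polar A" using assms(2,3) by (auto intro: image_eqI[of _ g "h _"])
  finally show ?thesis .
qed

lemma K0_linear_image:
  fixes g :: "'a::euclidean_space \<Rightarrow> 'a"
  assumes "linear g" "\<And>x. h (g x) = x" "A \<in> K0"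
  shows "g ` A \<in> K0"
proof -
  have "inj g" by (metis assms(2) injI)
  with assms show ?thesis
    by (auto simp: K0_def closed_injective_linear_image convex_linear_image linear_0 image_iff
        intro: bexI[of _ 0])
qed

lemma unique_fixed_point_if_conjugate_to_polar:
  fixes \<Phi> \<Psi> :: "'a::euclidean_space set \<Rightarrow> 'a set"
  assumes hom: "aw_homeomorphism \<Phi> \<Psi>" and f: "\<forall>A\<in>K0. f A = \<Phi> (polar (\<Psi> A))"
  shows "\<exists>!A. A \<in> K0 \<and> f A = A"
proof
  have ball: "cball 0 1 \<in> K0" by (simp add: K0_def)
  then show "\<Phi> (cball 0 1) \<in> K0 \<and> f (\<Phi> (cball 0 1)) = \<Phi> (cball 0 1)"
    using hom f polar_eq_self_iff[of "cball (0::'a) 1"] by (auto simp: aw_homeomorphism_def)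
  fix A assume A: "A \<in> K0 \<and> f A = A"
  then have "\<Phi> (polar (\<Psi> A)) = A" using f by metis
  then have "polar (\<Psi> A) = \<Psi> A" using hom polar_in_K0 by (metis aw_homeomorphism_def)
  then have "\<Psi> A = cball 0 1" by (simp add: polar_eq_self_iff)
  then show "A = \<Phi> (cball 0 1)" using hom A by (metis aw_homeomorphism_def)
qed

section \<open>Linear images in the Attouch--Wets metric\<close>

lemma infdist_less_iff: "A \<noteq> {} \<Longrightarrow> infdist x A < r \<longleftrightarrow> (\<exists>a\<in>A. dist x a < r)"
  by (simp add: infdist_notempty cINF_less_iff bdd_below_image_dist)

lemma infdist_diff_le_norm:
  assumes "0 \<in> A" "0 \<in> B"
  shows "\<bar>infdist y A - infdist y B\<bar> \<le> norm y"
  using infdist_le[OF assms(1), of y] infdist_le[OF assms(2), of y]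
    infdist_nonneg[of y A] infdist_nonneg[of y B] by auto

lemma dAW_lower_bound:
  fixes A B :: "'a::euclidean_space set"
  assumes "0 \<in> A" "0 \<in> B" "j \<ge> 1" "norm y < real j"
  shows "min (1 / real j) \<bar>infdist y A - infdist y B\<bar> \<le> dAW A B"
proof -
  define S where "S j = (SUP x\<in>{x::'a. norm x < real j}. \<bar>infdist x A - infdist x B\<bar>)" for j
  have "bdd_above ((\<lambda>x. \<bar>infdist x A - infdist x B\<bar>) ` {x. norm x < real j})"
    using infdist_diff_le_norm[OF assms(1,2)]
    by (intro bdd_aboveI2[of _ _ "real j"]) (meson less_imp_le order_trans mem_Collect_eq)
  then have "\<bar>infdist y A - infdist y B\<bar> \<le> S j"
    unfolding S_def using assms(4) by (intro cSUP_upper) auto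
  then have "min (1 / real j) \<bar>infdist y A - infdist y B\<bar> \<le> min (1 / real j) (S j)" by simp
  also have "\<dots> \<le> dAW A B" unfolding dAW_def S_def[symmetric]
    using assms(3) by (intro cSUP_upper bdd_aboveI2[of _ _ 1]) (auto simp: min_le_iff_disj)
  finally show ?thesis .
qed

lemma infdist_diff_le_dAW:
  fixes A B :: "'a::euclidean_space set"
  assumes "0 \<in> A" "0 \<in> B" "j \<ge> 1" "dAW A B < 1 / real j" "norm y < real j"
  shows "\<bar>infdist y A - infdist y B\<bar> \<le> dAW A B"
  using dAW_lower_bound[OF assms(1-3,5)] assms(4) by linarith

lemma dAW_le_if_close:
  fixes A B :: "'a::euclidean_space set"
  assumes "j \<ge> 1" "1 / real j \<le> c"
    and close: "\<And>y. norm y < real j \<Longrightarrow> \<bar>infdist y A - infdist y B\<bar> \<le> c"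
  shows "dAW A B \<le> c"
  unfolding dAW_def
proof (rule cSUP_least)
  fix i :: nat assume i: "i \<in> {1..}"
  show "min (1 / real i) (SUP x\<in>{x::'a. norm x < real i}. \<bar>infdist x A - infdist x B\<bar>) \<le> c"
  proof (cases "j \<le> i")
    case True
    then have "1 / real i \<le> 1 / real j" using assms(1) by (simp add: frac_le)
    then have "1 / real i \<le> c" using assms(2) by linarith
    then show ?thesis by (simp add: min.coboundedI1)
  next
    case False
    have "(SUP x\<in>{x::'a. norm x < real i}. \<bar>infdist x A - infdist x B\<bar>) \<le> c"
      using i False close by (intro cSUP_least) (auto intro: exI[of _ 0])
    then show ?thesis by (simp add: min.coboundedI2)
  qed
qed auto

lemma infdist_linear_image_le:
  fixes g :: "'a::euclidean_space \<Rightarrow> 'a"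
  assumes g: "linear g" and A: "0 \<in> A" and B: "B \<noteq> {}"
    and K: "K \<ge> 0" "\<And>x. norm (g x) \<le> K * norm x"
    and L: "L > 0" "\<And>x. norm x \<le> L * norm (g x)"
    and close: "\<And>y. norm y < L * (2 * r + 1) \<Longrightarrow> infdist y B \<le> infdist y A + \<epsilon>"
    and x: "norm x < r"
  shows "infdist x (g ` B) \<le> infdist x (g ` A) + K * \<epsilon>"
proof (rule field_le_epsilon)
  \<comment> \<open>A near-nearest point \<open>g a\<close> to \<open>x\<close> has \<open>a\<close> in the ball where \<open>A\<close> and \<open>B\<close> are close.\<close>
  fix e :: real assume e: "e > 0"
  define \<delta> where "\<delta> = min (1/2) (e / (1 + K))"
  have \<delta>_pos: "\<delta> > 0" using e K(1) by (simp add: \<delta>_def)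
  have \<delta>_half: "\<delta> \<le> 1/2" unfolding \<delta>_def by (rule min.cobounded1)
  have "(1 + K) * \<delta> \<le> (1 + K) * (e / (1 + K))"
    using K(1) by (intro mult_left_mono) (simp_all add: \<delta>_def)
  then have \<delta>e: "(1 + K) * \<delta> \<le> e" using K(1) by simp
  have "0 \<in> g ` A" using A linear_0[OF g] by (metis image_eqI)
  then have "infdist x (g ` A) \<le> norm x" using infdist_le[of 0 "g ` A" x] by simp
  moreover have "\<exists>a'\<in>g ` A. dist x a' < infdist x (g ` A) + \<delta>"
    using A \<delta>_pos by (subst infdist_less_iff[symmetric]) auto
  then obtain a where a: "a \<in> A" "dist x (g a) < infdist x (g ` A) + \<delta>" by blast
  moreover have "norm (g a) \<le> norm x + dist x (g a)"
    using dist_triangle[of 0 "g a" x] by simp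
  ultimately have "norm (g a) < 2 * r + 1" using x \<delta>_half by linarith
  then have "norm a < L * (2 * r + 1)" using L by (meson mult_strict_left_mono order_le_less_trans)
  then have "infdist a B < \<epsilon> + \<delta>" using close a(1) \<delta>_pos by fastforce
  then obtain b where b: "b \<in> B" "dist a b < \<epsilon> + \<delta>" using infdist_less_iff[OF B] by blast
  have "dist (g a) (g b) \<le> K * (\<epsilon> + \<delta>)"
    using K(2)[of "a - b"] b(2) K(1) mult_left_mono[of "dist a b" "\<epsilon> + \<delta>" K]
    by (simp add: dist_norm linear_diff[OF g])
  have "infdist x (g ` B) \<le> dist x (g a) + dist (g a) (g b)"
    using infdist_le[of "g b" "g ` B" x] dist_triangle[of x "g b" "g a"] b(1) by simp
  also have "\<dots> \<le> infdist x (g ` A) + K * \<epsilon> + (1 + K) * \<delta>"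
    using a(2) \<open>dist (g a) (g b) \<le> K * (\<epsilon> + \<delta>)\<close> by (simp add: algebra_simps)
  finally show "infdist x (g ` B) \<le> infdist x (g ` A) + K * \<epsilon> + e" using \<delta>e by linarith
qed

lemma aw_continuous_linear_image:
  fixes g :: "'a::euclidean_space \<Rightarrow> 'a"
  assumes g: "linear g" and h: "linear h" "\<And>x. h (g x) = x"
  shows "aw_continuous ((`) g)"
  unfolding aw_continuous_def
proof (intro ballI allI impI)
  fix A :: "'a set" and e :: real
  assume A: "A \<in> K0" and e: "e > 0"
  obtain K where K: "K > 0" "\<And>x. norm (g x) \<le> K * norm x" using linear_bounded_pos[OF g] by blast
  obtain L where L: "L > 0" "\<And>x. norm (h x) \<le> L * norm x" using linear_bounded_pos[OF h(1)] by blast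
  have L': "norm x \<le> L * norm (g x)" for x using L(2)[of "g x"] h(2) by simp
  obtain J :: nat where J: "J \<ge> 1" "1 / real J < e / 2"
  proof -
    obtain n where "inverse (real (Suc n)) < e / 2" using reals_Archimedean[of "e / 2"] e by auto
    then show thesis by (intro that[of "Suc n"]) (simp_all add: inverse_eq_divide)
  qed
  obtain R :: nat where R: "R \<ge> 1" "L * (2 * real J + 1) \<le> real R"
    using real_arch_simple[of "L * (2 * real J + 1)"] by (metis max.cobounded1 max.cobounded2 of_nat_max order_trans)
  define d where "d = min (1 / real R) (e / (2 * K))"
  show "\<exists>d>0. \<forall>B\<in>K0. dAW A B < d \<longrightarrow> dAW (g ` A) (g ` B) < e"
  proof (intro exI[of _ d] conjI ballI impI)
    show "d > 0" using R(1) e K(1) by (simp add: d_def)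
    fix B assume B: "B \<in> K0" and AB: "dAW A B < d"
    have A0: "0 \<in> A" and B0: "0 \<in> B" using A B by (auto simp: K0_def)
    have close: "\<bar>infdist y A - infdist y B\<bar> \<le> d" if "norm y < L * (2 * real J + 1)" for y
      using infdist_diff_le_dAW[OF A0 B0 R(1), of y] AB that R(2) by (simp add: d_def)
    have "\<bar>infdist x (g ` A) - infdist x (g ` B)\<bar> \<le> K * d" if "norm x < real J" for x
      using infdist_linear_image_le[OF g A0 _ less_imp_le[OF K(1)] K(2) L(1) L' _ that, of B d]
        infdist_linear_image_le[OF g B0 _ less_imp_le[OF K(1)] K(2) L(1) L' _ that, of A d]
        close A0 B0 by (force simp: abs_le_iff)
    moreover have "K * d \<le> e / 2" using K(1) by (simp add: d_def min_def field_simps)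
    ultimately have "dAW (g ` A) (g ` B) \<le> e / 2"
      using J by (intro dAW_le_if_close[OF J(1)]) force+
    then show "dAW (g ` A) (g ` B) < e" using e by simp
  qed
qed

lemma aw_homeomorphism_linear_image:
  fixes g h :: "'a::euclidean_space \<Rightarrow> 'a"
  assumes "linear g" "linear h" "\<And>x. h (g x) = x" "\<And>x. g (h x) = x"
  shows "aw_homeomorphism ((`) g) ((`) h)"
  using assms
  by (auto simp: aw_homeomorphism_def image_image aw_continuous_linear_image
      intro: K0_linear_image[of g h] K0_linear_image[of h g])

section \<open>Fixed bodies of an indefinite map\<close>

lemma young_weighted:
  fixes m p q :: real
  assumes "m > 0"
  shows "2 * (p * q) \<le> p\<^sup>2 / m + m * q\<^sup>2"
proof -
  have "0 \<le> (p - m * q)\<^sup>2 / m" using assms by simp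
  also have "\<dots> = p\<^sup>2 / m - 2 * (p * q) + m * q\<^sup>2"
    using assms by (simp add: power2_diff field_simps power2_eq_square)
  finally show ?thesis by simp
qed

locale indefinite_eigenbasis = orthonormal_basis B for B :: "'a::euclidean_space set" +
  fixes T :: "'a \<Rightarrow> 'a" and \<mu> :: "'a \<Rightarrow> real" and u :: 'a
  assumes linear_T: "linear T" and inj_T: "inj T"
    and eigen: "\<And>b. b \<in> B \<Longrightarrow> T b = \<mu> b *\<^sub>R b"
    and u: "u \<in> B" and eigen_u: "\<mu> u < 0"
begin

lemma eigen_nonzero:
  assumes "b \<in> B"
  shows "\<mu> b \<noteq> 0"
  by (rule eigenvalue_nonzero_if_inj[OF linear_T inj_T basis_nonzero[OF assms] eigen[OF assms]])

lemma inner_basis_T: "b \<in> B \<Longrightarrow> b \<bullet> T x = \<mu> b * (b \<bullet> x)"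
  using eigenbasis_diag[OF linear_T eigen] inner_basis_diag by simp

text \<open>The sublevel set \<open>{s. rho_u t s \<le> 1}\<close> is the segment \<open>[\<mu> u / t, t]\<close>.\<close>

definition rho_u :: "real \<Rightarrow> real \<Rightarrow> real" where
  "rho_u t s = (if 0 \<le> s then (s / t)\<^sup>2 else (s * t / \<mu> u)\<^sup>2)"

definition rho_u_dual :: "real \<Rightarrow> real \<Rightarrow> real" where
  "rho_u_dual t \<sigma> = (if 0 \<le> \<sigma> then (\<sigma> * t)\<^sup>2 else (\<sigma> * \<mu> u / t)\<^sup>2)"

definition rho :: "real \<Rightarrow> 'a \<Rightarrow> real" where
  "rho t x = rho_u t (u \<bullet> x) + (\<Sum>b\<in>B-{u}. (b \<bullet> x)\<^sup>2 / \<bar>\<mu> b\<bar>)"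

definition rho_dual :: "real \<Rightarrow> 'a \<Rightarrow> real" where
  "rho_dual t y = rho_u_dual t (u \<bullet> y) + (\<Sum>b\<in>B-{u}. \<bar>\<mu> b\<bar> * (b \<bullet> y)\<^sup>2)"

definition body :: "real \<Rightarrow> 'a set" where
  "body t = {x. rho t x \<le> 1}"

lemma rho_u_nonneg: "rho_u t s \<ge> 0"
  by (simp add: rho_u_def)

lemma rho_u_dual_nonneg: "rho_u_dual t \<sigma> \<ge> 0"
  by (simp add: rho_u_dual_def)

lemma young_rho_u:
  assumes t: "t > 0"
  shows "2 * (s * \<sigma>) \<le> rho_u t s + rho_u_dual t \<sigma>"
proof -
  consider "0 \<le> s" "0 \<le> \<sigma>" | "s < 0" "\<sigma> < 0" | "s * \<sigma> \<le> 0"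
    by (cases "0 \<le> s"; cases "0 \<le> \<sigma>") (auto simp: mult_le_0_iff)
  then show ?thesis
  proof cases
    case 1
    then show ?thesis using young_weighted[of "t\<^sup>2" s \<sigma>] t
      by (simp add: rho_u_def rho_u_dual_def power_divide power_mult_distrib mult.commute)
  next
    case 2
    have "(s * t / \<mu> u)\<^sup>2 = s\<^sup>2 / (\<mu> u / t)\<^sup>2" "(\<sigma> * \<mu> u / t)\<^sup>2 = (\<mu> u / t)\<^sup>2 * \<sigma>\<^sup>2"
      using t eigen_u by (simp_all add: power_divide power_mult_distrib)
    then show ?thesis
      using 2 young_weighted[of "(\<mu> u / t)\<^sup>2" s \<sigma>] t eigen_u by (simp add: rho_u_def rho_u_dual_def)
  next
    case 3
    then show ?thesis using rho_u_nonneg[of t s] rho_u_dual_nonneg[of t \<sigma>] by linarith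
  qed
qed

lemma rho_u_equality:
  assumes t: "t > 0"
  obtains s where "rho_u t s = rho_u_dual t \<sigma>" "s * \<sigma> = rho_u_dual t \<sigma>"
proof (cases "0 \<le> \<sigma>")
  case True
  then show ?thesis
    using t by (intro that[of "t\<^sup>2 * \<sigma>"]) (simp_all add: rho_u_def rho_u_dual_def power2_eq_square)
next
  case False
  have "\<sigma> * (\<mu> u)\<^sup>2 / t\<^sup>2 < 0" using False t eigen_u by (simp add: divide_neg_pos mult_neg_pos)
  then show ?thesis
    using False t eigen_u
    by (intro that[of "\<sigma> * (\<mu> u)\<^sup>2 / t\<^sup>2"]) (simp_all add: rho_u_def rho_u_dual_def power2_eq_square)
qed

lemma rho_u_scale: "0 \<le> c \<Longrightarrow> rho_u t (c * s) = c\<^sup>2 * rho_u t s"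
  by (cases "c = 0") (auto simp: rho_u_def zero_le_mult_iff power_mult_distrib power_divide)

lemma rho_u_eigen: "rho_u t (\<mu> u * \<sigma>) = rho_u_dual t \<sigma>"
proof (cases "0 < \<sigma>")
  case True
  then have "\<mu> u * \<sigma> < 0" using eigen_u by (simp add: mult_neg_pos)
  then show ?thesis using True eigen_u by (simp add: rho_u_def rho_u_dual_def)
next
  case False
  then have "0 \<le> \<mu> u * \<sigma>" using eigen_u by (simp add: mult_nonpos_nonpos)
  then show ?thesis using False
    by (cases "\<sigma> = 0") (simp_all add: rho_u_def rho_u_dual_def mult.commute)
qed

lemma young_rho:
  assumes t: "t > 0"
  shows "2 * (x \<bullet> y) \<le> rho t x + rho_dual t y"
proof -
  have "2 * (x \<bullet> y) = 2 * ((u \<bullet> x) * (u \<bullet> y)) + (\<Sum>b\<in>B-{u}. 2 * ((b \<bullet> x) * (b \<bullet> y)))"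
    by (simp add: inner_basis_expansion[of x y] sum.remove[OF finite_basis u] sum_distrib_left)
  also have "\<dots> \<le> rho_u t (u \<bullet> x) + rho_u_dual t (u \<bullet> y) +
      (\<Sum>b\<in>B-{u}. (b \<bullet> x)\<^sup>2 / \<bar>\<mu> b\<bar> + \<bar>\<mu> b\<bar> * (b \<bullet> y)\<^sup>2)"
    using young_rho_u[OF t] eigen_nonzero
    by (intro add_mono sum_mono young_weighted) auto
  also have "\<dots> = rho t x + rho_dual t y"
    by (simp add: rho_def rho_dual_def sum.distrib)
  finally show ?thesis .
qed

lemma rho_equality:
  assumes t: "t > 0"
  obtains x where "rho t x = rho_dual t y" "x \<bullet> y = rho_dual t y"
proof -
  obtain s where s: "rho_u t s = rho_u_dual t (u \<bullet> y)" "s * (u \<bullet> y) = rho_u_dual t (u \<bullet> y)"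
    using rho_u_equality[OF t] .
  define c where "c b = (if b = u then s else \<bar>\<mu> b\<bar> * (b \<bullet> y))" for b
  define x where "x = (\<Sum>b\<in>B. c b *\<^sub>R b)"
  have xc: "b \<bullet> x = c b" if "b \<in> B" for b
    using inner_basis_sum[OF that] by (simp add: x_def)
  show ?thesis
  proof
    have "(\<Sum>b\<in>B-{u}. (b \<bullet> x)\<^sup>2 / \<bar>\<mu> b\<bar>) = (\<Sum>b\<in>B-{u}. \<bar>\<mu> b\<bar> * (b \<bullet> y)\<^sup>2)"
      using eigen_nonzero by (intro sum.cong refl) (simp add: xc c_def power2_eq_square)
    then show "rho t x = rho_dual t y" using s(1) xc[OF u] by (simp add: rho_def rho_dual_def c_def)
    have "x \<bullet> y = c u * (u \<bullet> y) + (\<Sum>b\<in>B-{u}. c b * (b \<bullet> y))"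
      by (simp add: x_def inner_sum_left inner_add_left sum.remove[OF finite_basis u])
    also have "\<dots> = rho_dual t y"
      using s(2) by (simp add: rho_dual_def c_def power2_eq_square mult.assoc)
    finally show "x \<bullet> y = rho_dual t y" .
  qed
qed

lemma rho_scale:
  assumes "0 \<le> c"
  shows "rho t (c *\<^sub>R x) = c\<^sup>2 * rho t x"
proof -
  have "(b \<bullet> (c *\<^sub>R x))\<^sup>2 / \<bar>\<mu> b\<bar> = c\<^sup>2 * ((b \<bullet> x)\<^sup>2 / \<bar>\<mu> b\<bar>)" for b
    by (simp add: power_mult_distrib)
  then show ?thesis by (simp add: rho_def rho_u_scale[OF assms] distrib_left sum_distrib_left power_mult_distrib)
qed

lemma rho_T: "rho t (T y) = rho_dual t y"
proof -
  have "(b \<bullet> T y)\<^sup>2 / \<bar>\<mu> b\<bar> = \<bar>\<mu> b\<bar> * (b \<bullet> y)\<^sup>2" if "b \<in> B" for b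
    using that eigen_nonzero[OF that]
    by (cases "\<mu> b > 0") (simp_all add: inner_basis_T power_mult_distrib power2_eq_square)
  then have "(\<Sum>b\<in>B-{u}. (b \<bullet> T y)\<^sup>2 / \<bar>\<mu> b\<bar>) = (\<Sum>b\<in>B-{u}. \<bar>\<mu> b\<bar> * (b \<bullet> y)\<^sup>2)"
    by (intro sum.cong refl) simp
  then show ?thesis by (simp add: rho_def rho_dual_def inner_basis_T[OF u] rho_u_eigen)
qed

lemma polar_body:
  assumes t: "t > 0"
  shows "polar (body t) = {y. rho_dual t y \<le> 1}"
proof (intro equalityI subsetI)
  fix y assume y: "y \<in> polar (body t)"
  define N where "N = rho_dual t y"
  obtain x where x: "rho t x = N" "x \<bullet> y = N" using rho_equality[OF t] N_def by metis
  show "y \<in> {y. rho_dual t y \<le> 1}"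
  proof (cases "N \<le> 1")
    case False
    \<comment> \<open>The normalised equality vector lies in the body but pairs with \<open>y\<close> to \<open>sqrt N > 1\<close>.\<close>
    then have N: "N > 0" by simp
    have "rho t (x /\<^sub>R sqrt N) = 1" using N x(1) by (simp add: rho_scale power_inverse)
    then have "x /\<^sub>R sqrt N \<in> body t" by (simp add: body_def)
    then have "(x /\<^sub>R sqrt N) \<bullet> y \<le> 1" using y unfolding polar_def by blast
    moreover have "(x /\<^sub>R sqrt N) \<bullet> y = sqrt N"
      using N x(2) real_div_sqrt[of N] by (simp add: divide_inverse mult.commute)
    ultimately show ?thesis using False by simp
  qed (simp add: N_def)
next
  fix y assume "y \<in> {y. rho_dual t y \<le> 1}"
  then have "x \<bullet> y \<le> 1" if "rho t x \<le> 1" for x using young_rho[OF t, of x y] that by simp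
  then show "y \<in> polar (body t)" by (simp add: body_def polar_def)
qed

lemma surj_T: "surj T"
  using linear_inj_imp_surj[OF linear_T inj_T] .

lemma T_image_polar_body:
  assumes "t > 0"
  shows "T ` polar (body t) = body t"
proof -
  have "polar (body t) = T -` body t"
    unfolding polar_body[OF assms] by (auto simp: body_def rho_T)
  then show ?thesis using surj_T by (simp add: surj_image_vimage_eq)
qed

lemma rho_le_norm: "\<exists>C>0. \<forall>x. rho t x \<le> C * (norm x)\<^sup>2"
proof (intro exI conjI allI)
  define C where "C = 1 + 1 / t\<^sup>2 + t\<^sup>2 / (\<mu> u)\<^sup>2 + (\<Sum>b\<in>B-{u}. 1 / \<bar>\<mu> b\<bar>)"
  have sq_le: "(b \<bullet> x)\<^sup>2 \<le> (norm x)\<^sup>2" if "b \<in> B" for b x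
    using Cauchy_Schwarz_ineq2[of b x] norm_basis[OF that] by (metis abs_ge_zero mult_1 power2_abs power_mono)
  show "C > 0" unfolding C_def by (intro add_pos_nonneg sum_nonneg) auto
  fix x
  have "rho_u t (u \<bullet> x) \<le> (u \<bullet> x)\<^sup>2 * (1 / t\<^sup>2 + t\<^sup>2 / (\<mu> u)\<^sup>2)"
    by (simp add: rho_u_def power_divide power_mult_distrib algebra_simps)
  also have "\<dots> \<le> (norm x)\<^sup>2 * (1 / t\<^sup>2 + t\<^sup>2 / (\<mu> u)\<^sup>2)"
    using sq_le[OF u] by (intro mult_right_mono) auto
  finally have "rho t x \<le> (norm x)\<^sup>2 * (1 / t\<^sup>2 + t\<^sup>2 / (\<mu> u)\<^sup>2) + (\<Sum>b\<in>B-{u}. (norm x)\<^sup>2 * (1 / \<bar>\<mu> b\<bar>))"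
    unfolding rho_def using sq_le by (intro add_mono sum_mono) (auto simp: divide_right_mono)
  also have "\<dots> \<le> C * (norm x)\<^sup>2"
    by (simp add: C_def sum_distrib_left algebra_simps)
  finally show "rho t x \<le> C * (norm x)\<^sup>2" .
qed

lemma zero_in_interior_body: "0 \<in> interior (body t)"
proof -
  obtain C where C: "C > 0" "\<And>x. rho t x \<le> C * (norm x)\<^sup>2" using rho_le_norm by blast
  have ball: "ball 0 (1 / sqrt C) \<subseteq> body t"
  proof
    fix x :: 'a assume "x \<in> ball 0 (1 / sqrt C)"
    then have "(norm x)\<^sup>2 < (1 / sqrt C)\<^sup>2" by (intro power_strict_mono) auto
    then have "C * (norm x)\<^sup>2 < 1" using C(1) by (simp add: power_divide field_simps)
    then show "x \<in> body t" using C(2)[of x] by (simp add: body_def)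
  qed
  show ?thesis
    unfolding mem_interior using ball C(1) by (intro exI[of _ "1 / sqrt C"]) simp
qed

lemma body_K0b:
  assumes t: "t > 0"
  shows "body t \<in> K0b"
proof -
  have eq: "body t = T ` polar (body t)" using T_image_polar_body[OF t] by simp
  have "closed (body t)" "convex (body t)" "bounded (body t)"
  proof -
    show "closed (body t)"
      using polar_in_K0[of "body t"] linear_T inj_T
      by (subst eq) (simp add: K0_def closed_injective_linear_image)
    show "convex (body t)"
      using polar_in_K0[of "body t"] linear_T
      by (subst eq) (simp add: K0_def convex_linear_image)
    show "bounded (body t)"
      using bounded_polar[OF zero_in_interior_body] linear_T
      by (subst eq, intro bounded_linear_image) (simp_all add: linear_conv_bounded_linear)
  qed
  then show ?thesis using zero_in_interior_body by (simp add: K0b_def compact_eq_bounded_closed)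
qed

lemma scaled_u_in_body:
  assumes "t > 0" "c \<ge> 0"
  shows "c *\<^sub>R u \<in> body t \<longleftrightarrow> c \<le> t"
proof -
  have "b \<bullet> u = 0" if "b \<in> B - {u}" for b
    using orthogonal_basis u that by (auto simp: pairwise_def orthogonal_def)
  moreover have "u \<bullet> u = 1" using norm_basis[OF u] by (simp add: norm_eq_1)
  ultimately have "rho t (c *\<^sub>R u) = (c / t)\<^sup>2" using assms(2) by (simp add: rho_def rho_u_def)
  then show ?thesis using assms by (simp add: body_def power_le_one_iff divide_le_eq_1)
qed

lemma inj_on_body: "inj_on body {0<..}"
proof (rule inj_onI)
  have le: "s \<le> t" if "s > 0" "t > 0" "body s = body t" for s t
    using scaled_u_in_body[of s s] scaled_u_in_body[of t s] that by simp
  fix s t :: real assume "s \<in> {0<..}" "t \<in> {0<..}" "body s = body t"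
  then show "s = t" using le[of s t] le[of t s] by simp
qed

lemma infinite_fixed_points: "infinite {A \<in> K0b. T ` polar A = A}"
proof -
  have "body ` {0<..} \<subseteq> {A \<in> K0b. T ` polar A = A}"
    using body_K0b T_image_polar_body by auto
  moreover have "infinite (body ` {0<..})"
    by (simp add: finite_image_iff[OF inj_on_body] infinite_Ioi)
  ultimately show ?thesis using infinite_super by blast
qed

end

theorem theorem2:
  fixes M :: "real^'n^'n"
  assumes n2: "CARD('n) \<ge> 2"
    and sym: "transpose M = M"
    and iso: "invertible M"
  defines "f \<equiv> (\<lambda>A::(real^'n) set. (\<lambda>x. M *v x) ` polar A)"
  shows "((\<forall>x. x \<noteq> 0 \<longrightarrow> x \<bullet> (M *v x) > 0) \<longrightarrow>
            (\<exists>\<Phi> \<Psi>. aw_homeomorphism \<Phi> \<Psi> \<and> (\<forall>A\<in>K0. f A = \<Phi> (polar (\<Psi> A))))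
            \<and> (\<exists>!A. A \<in> K0 \<and> f A = A))
       \<and> (\<not> (\<forall>x. x \<noteq> 0 \<longrightarrow> x \<bullet> (M *v x) > 0) \<longrightarrow>
            infinite {A \<in> K0b. f A = A})"
proof -
  have lin: "linear ((*v) M)" by simp
  have inj: "inj ((*v) M)" using iso matrix_left_invertible_injective by (auto simp: invertible_def)
  obtain B \<mu> where onb: "orthonormal_basis B" and eig: "\<And>b. b \<in> B \<Longrightarrow> M *v b = \<mu> b *\<^sub>R b"
    using selfadjoint_orthonormal_eigenbasis[OF lin matrix_vector_mult_selfadjoint[OF sym]] by blast
  interpret orthonormal_basis B by (rule onb)
  have pd_iff: "(\<forall>x. x \<noteq> 0 \<longrightarrow> x \<bullet> (M *v x) > 0) \<longleftrightarrow> (\<forall>b\<in>B. \<mu> b > 0)"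
    using positive_definite_iff_eigenvalues_pos[OF lin eig] by simp
  show ?thesis
  proof (rule conjI; intro impI)
    assume "\<forall>x. x \<noteq> 0 \<longrightarrow> x \<bullet> (M *v x) > 0"
    then have pos: "\<And>b. b \<in> B \<Longrightarrow> \<mu> b > 0" using pd_iff by blast
    obtain L L' where L: "linear L" "linear L'" "\<And>x. L (L' x) = x" "\<And>x. L' (L x) = x"
        "\<And>x y. L' x \<bullet> y = x \<bullet> L' y" and sqrt: "\<And>x. L (L x) = diag \<mu> x"
      using diag_sqrt[of \<mu>, OF pos] by blast
    have "\<forall>A\<in>K0. f A = L ` polar (L' ` A)"
      by (simp add: f_def polar_image_selfadjoint[OF L(5,3,4)] image_image sqrt
          eigenbasis_diag[OF lin eig])
    then show "(\<exists>\<Phi> \<Psi>. aw_homeomorphism \<Phi> \<Psi> \<and> (\<forall>A\<in>K0. f A = \<Phi> (polar (\<Psi> A))))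
        \<and> (\<exists>!A. A \<in> K0 \<and> f A = A)"
      using aw_homeomorphism_linear_image[OF L(1,2,4,3)] unique_fixed_point_if_conjugate_to_polar by blast
  next
    assume "\<not> (\<forall>x. x \<noteq> 0 \<longrightarrow> x \<bullet> (M *v x) > 0)"
    then obtain u where u: "u \<in> B" "\<mu> u \<le> 0" using pd_iff by (auto simp: not_less)
    moreover have "\<mu> u \<noteq> 0"
      by (rule eigenvalue_nonzero_if_inj[OF lin inj basis_nonzero[OF u(1)] eig[OF u(1)]])
    ultimately interpret indefinite_eigenbasis B "(*v) M" \<mu> u
      using onb lin inj eig by (simp add: indefinite_eigenbasis_def indefinite_eigenbasis_axioms_def)
    show "infinite {A \<in> K0b. f A = A}" using infinite_fixed_points by (simp add: f_def)
  qed
qed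

end
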